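(* Let $n$ be a positive integer and let $(a_{i,j})_{0\le i\le n,\ 0\le j\le n-1}$ be an array of elements of a commutative ring. Then $$\det_{0\le i,j\le n-1}(a_{i,j}+a_{i+1,j})=\sum_{s=0}^{n}\det_{0\le i,j\le n-1}\bigl(a_{i+\chi(i\ge s),j}\bigr),$$ where $\chi(\mathcal S)=1$ if the statement $\mathcal S$ is true and $\chi(\mathcal S)=0$ otherwise. *)

theory Defs
  imports "Jordan_Normal_Form.Determinant"
begin

end

theory Submission
  imports Defs
begin

text \<open>Expand the rows \<open>a\<^sub>i + a\<^sub>i\<^sub>+\<^sub>1\<close> one at a time, top to bottom, by multilinearity.
  After the first \<open>k\<close> rows have been expanded, the surviving terms are indexed by the
  position \<open>s \<le> k\<close> of the first shifted row: once a row \<open>i\<close> has been replaced by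
  \<open>a\<^sub>i\<^sub>+\<^sub>1\<close>, choosing \<open>a\<^sub>i\<^sub>+\<^sub>1\<close> for row \<open>i + 1\<close> as well would produce two equal rows.
  So splitting row \<open>k\<close> keeps each term \<open>s < k\<close> (with row \<open>k\<close> shifted) and turns the
  term \<open>s = k\<close> into the two terms \<open>s = k\<close> and \<open>s = k + 1\<close>.\<close>

definition partially_expanded_mat ::
    "nat \<Rightarrow> (nat \<Rightarrow> nat \<Rightarrow> 'a :: comm_ring_1) \<Rightarrow> nat \<Rightarrow> nat \<Rightarrow> 'a mat" where
  "partially_expanded_mat n a k s = mat\<^sub>r n n (\<lambda>i.
     if i < k then vec n (a (if s \<le> i then i + 1 else i))
     else vec n (a i) + vec n (a (i + 1)))"

lemma det_partially_expanded_mat_Suc: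
  fixes a :: "nat \<Rightarrow> nat \<Rightarrow> 'a :: comm_ring_1"
  assumes "k < n" and "s \<le> k"
  shows "det (partially_expanded_mat n a k s) =
    det (partially_expanded_mat n a (Suc k) s) +
    (if s = k then det (partially_expanded_mat n a (Suc k) (Suc k)) else 0)"
proof -
  define r where "r i = (if i < k then vec n (a (if s \<le> i then i + 1 else i))
                         else vec n (a i) + vec n (a (i + 1)))" for i
  define row_k_by where "row_k_by v = mat\<^sub>r n n (\<lambda>i. if i = k then v else r i)" for v
  have "partially_expanded_mat n a k s = mat\<^sub>r n n (\<lambda>i.
      if i = k then (\<lambda>_. vec n (a k)) i + (\<lambda>_. vec n (a (k + 1))) i else r i)"
    unfolding partially_expanded_mat_def r_def by (rule arg_cong[where f = "mat\<^sub>r n n"]) auto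
  then have split: "det (partially_expanded_mat n a k s) =
      det (row_k_by (vec n (a k))) + det (row_k_by (vec n (a (k + 1))))"
    unfolding row_k_by_def by (simp only:) (rule det_row_add; use \<open>k < n\<close> in \<open>auto simp: r_def\<close>)
  have shifted: "row_k_by (vec n (a (k + 1))) = partially_expanded_mat n a (Suc k) s"
    unfolding row_k_by_def partially_expanded_mat_def r_def using \<open>s \<le> k\<close>
    by (intro arg_cong[where f = "mat\<^sub>r n n"]) auto
  show ?thesis
  proof (cases "s = k")
    case True
    then have "row_k_by (vec n (a k)) = partially_expanded_mat n a (Suc k) (Suc k)"
      unfolding row_k_by_def partially_expanded_mat_def r_def
      by (intro arg_cong[where f = "mat\<^sub>r n n"]) auto
    with split shifted True show ?thesis by simp
  next
    case False
    with \<open>s \<le> k\<close> have "s < k" by simp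
    have "det (row_k_by (vec n (a k))) = 0"
    proof (rule det_identical_rows[of _ n "k - 1" k])
      have "k - 1 + 1 = k" "s \<le> k - 1" "k - 1 < k" using \<open>s < k\<close> by auto
      then show "row (row_k_by (vec n (a k))) (k - 1) = row (row_k_by (vec n (a k))) k"
        using \<open>k < n\<close> by (simp add: row_k_by_def r_def)
    qed (use \<open>s < k\<close> \<open>k < n\<close> in \<open>auto simp: row_k_by_def\<close>)
    with split shifted False show ?thesis by simp
  qed
qed

lemma det_partially_expanded_mat_sum:
  fixes a :: "nat \<Rightarrow> nat \<Rightarrow> 'a :: comm_ring_1"
  assumes "k \<le> n"
  shows "det (partially_expanded_mat n a 0 0) = (\<Sum>s = 0..k. det (partially_expanded_mat n a k s))"
  using assms
proof (induction k)
  case 0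
  then show ?case by simp
next
  case (Suc k)
  then have "det (partially_expanded_mat n a 0 0) = (\<Sum>s = 0..k. det (partially_expanded_mat n a k s))"
    by simp
  also have "\<dots> = (\<Sum>s = 0..k. det (partially_expanded_mat n a (Suc k) s) +
      (if s = k then det (partially_expanded_mat n a (Suc k) (Suc k)) else 0))"
    using Suc.prems by (intro sum.cong) (auto simp: det_partially_expanded_mat_Suc)
  also have "\<dots> = (\<Sum>s = 0..Suc k. det (partially_expanded_mat n a (Suc k) s))"
    by (simp add: sum.distrib)
  finally show ?case .
qed

theorem lemma4:
  fixes n :: nat and a :: "nat \<Rightarrow> nat \<Rightarrow> 'a :: comm_ring_1"
  assumes "n \<ge> 1"
  shows "det (mat n n (\<lambda>(i, j). a i j + a (i + 1) j))
       = (\<Sum>s = 0..n. det (mat n n (\<lambda>(i, j). a (i + (if i \<ge> s then 1 else 0)) j)))"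
proof -
  have "mat n n (\<lambda>(i, j). a i j + a (i + 1) j) = partially_expanded_mat n a 0 0"
    unfolding partially_expanded_mat_def by (rule eq_matI) auto
  moreover have "mat n n (\<lambda>(i, j). a (i + (if i \<ge> s then 1 else 0)) j) =
      partially_expanded_mat n a n s" for s
    unfolding partially_expanded_mat_def by (rule eq_matI) auto
  ultimately show ?thesis
    using det_partially_expanded_mat_sum[of n n a] by simp
qed

end
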